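(* Let $\alpha\in\mathbb{N}$, let $m$ be a positive odd integer with $m>6\alpha+2$, and let $\mathbb{S}=\langle 6,6\alpha+2,m\rangle$. Define $\beta_1=6\,x_1$, $\beta_2=(6\alpha+2)\,x_2$, $\beta_3=m\,x_3$, where $x_1=\min\{x\ge1:6x\in\langle 6\alpha+2,m\rangle\}$, $x_2=\min\{x\ge1:(6\alpha+2)x\in\langle 6,m\rangle\}$, $x_3=\min\{x\ge1:mx\in\langle 6,6\alpha+2\rangle\}$. Factorizations are taken with respect to $(6,6\alpha+2,m)$. Then: (i) If $6\alpha+2<m\le 9\alpha+3$ and $3\mid m$, then $\beta_1=2m$ and its factorizations are $(0,0,2)$ and $\left(\frac{m-k(3\alpha+1)}{3},k,0\right)$ for $k\in\mathbb{N}$ with $k\le\frac{m}{3\alpha+1}$ and $3\mid m-k(3\alpha+1)$. Otherwise, $\beta_1=18\alpha+6$ and its factorizations are $(3\alpha+1,0,0)$ and $(0,3,0)$. (ii) $\beta_2=18\alpha+6$. If $6\alpha+2<m\le 9\alpha+3$ and $3\mid m$, then its factorizations are $\left(\frac{9\alpha+3-m}{3},0,2\right)$, $(3\alpha+1,0,0)$ and $(0,3,0)$. Otherwise, its factorizations are $(3\alpha+1,0,0)$ and $(0,3,0)$. (iii) $\beta_3=2m$ and its factorizations are $(0,0,2)$ and $\left(\frac{m-k(3\alpha+1)}{3},k,0\right)$ for $k\in\mathbb{N}$ with $k\le\frac{m}{3\alpha+1}$ and $3\mid m-k(3\alpha+1)$.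
   Context: $\mathbb{N}=\{0,1,2,\dots\}$. $\langle a_1,\dots,a_e\rangle$ is the set of $\mathbb{N}$-linear combinations of $a_1,\dots,a_e$. A factorization of $a\in\langle a_1,a_2,a_3\rangle$ is a tuple $(\eta_1,\eta_2,\eta_3)\in\mathbb{N}^3$ with $\eta_1a_1+\eta_2a_2+\eta_3a_3=a$. *)

theory Defs
  imports Main
begin

definition gen2 :: "nat \<Rightarrow> nat \<Rightarrow> nat set" where
  "gen2 a b = {x. \<exists>u v. x = u * a + v * b}"

definition gen3 :: "nat \<Rightarrow> nat \<Rightarrow> nat \<Rightarrow> nat set" where
  "gen3 a1 a2 a3 = {x. \<exists>u v w. x = u * a1 + v * a2 + w * a3}"

definition factorizations :: "nat \<Rightarrow> nat \<Rightarrow> nat \<Rightarrow> nat \<Rightarrow> (nat \<times> nat \<times> nat) set" where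
  "factorizations a1 a2 a3 x = {(e1, e2, e3). e1 * a1 + e2 * a2 + e3 * a3 = x}"

end

theory Submission
  imports Defs
begin

text \<open>Put b = 3\<alpha> + 1, so that the generators are 6, 2b and m with b = 1 (mod 3), m odd and
m > 2b. In an expression of an even number the odd generator m occurs an even number of times,
and up to 6b < 3m it occurs at most twice. Together with the fact that 3 divides u b only if it
divides u, this leaves finitely many cases, each settled by elementary arithmetic: they
enumerate the factorizations of 2m and 6b and give the lower bounds that determine x1, x2
and x3.\<close>

lemma mem_factorizations:
  "(e1, e2, e3) \<in> factorizations a1 a2 a3 x \<longleftrightarrow> e1 * a1 + e2 * a2 + e3 * a3 = x"
  by (simp add: factorizations_def)

lemma mem_gen2I: "x = u * a + v * c \<Longrightarrow> x \<in> gen2 a c"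
  unfolding gen2_def by blast

lemma three_mult_add_eq_iff:
  "3 * q + t = (n :: nat) \<longleftrightarrow> t \<le> n \<and> 3 dvd (n - t) \<and> q = (n - t) div 3"
  by presburger

locale generators_6_2b_m =
  fixes b m :: nat
  assumes b_mod_3: "b mod 3 = 1"
    and odd_m: "odd m"
    and double_b_less_m: "2 * b < m"
begin

lemma b_pos: "0 < b"
  using b_mod_3 by (cases b) auto

lemma three_dvd_mult_b_iff: "3 dvd u * b \<longleftrightarrow> 3 dvd u"
proof -
  have "coprime 3 b"
    using b_mod_3 by (metis coprime_1_right coprime_mod_right_iff zero_neq_numeral)
  then show ?thesis
    by (simp add: coprime_dvd_mult_left_iff)
qed

lemma even_if_even_mult_m: "even (v * m) \<Longrightarrow> even v"
  using odd_m by simp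

lemma factorization_eq_double_m_iff:
  "e1 * 6 + e2 * (2 * b) + e3 * m = 2 * m \<longleftrightarrow>
     (e1, e2, e3) = (0, 0, 2) \<or> (e3 = 0 \<and> 3 * e1 + e2 * b = m)"
proof
  assume eq: "e1 * 6 + e2 * (2 * b) + e3 * m = 2 * m"
  have "e3 * m = 2 * (m - 3 * e1 - e2 * b)"
    using eq by (simp add: algebra_simps)
  then have "even e3"
    by (metis dvd_triv_left even_if_even_mult_m)
  moreover have "e3 \<le> 2"
    using eq odd_m by (metis le_add2 mult_le_cancel2 odd_pos trans_le_add2)
  ultimately have "e3 = 0 \<or> e3 = 2"
    by presburger
  then show "(e1, e2, e3) = (0, 0, 2) \<or> (e3 = 0 \<and> 3 * e1 + e2 * b = m)"
    using eq b_pos by auto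
qed auto

lemma factorizations_double_m:
  "factorizations 6 (2 * b) m (2 * m) =
     {(0, 0, 2)} \<union> {((m - k * b) div 3, k, 0) | k. k * b \<le> m \<and> 3 dvd (m - k * b)}"
proof (rule set_eqI)
  fix x :: "nat \<times> nat \<times> nat"
  obtain e1 e2 e3 where x: "x = (e1, e2, e3)"
    by (cases x)
  show "x \<in> factorizations 6 (2 * b) m (2 * m) \<longleftrightarrow> x \<in> {(0, 0, 2)} \<union>
          {((m - k * b) div 3, k, 0) | k. k * b \<le> m \<and> 3 dvd (m - k * b)}"
    unfolding x mem_factorizations factorization_eq_double_m_iff three_mult_add_eq_iff
    by auto
qed

lemma factorization_eq_6b_iff:
  "e1 * 6 + e2 * (2 * b) + e3 * m = 6 * b \<longleftrightarrow>
     (e1, e2, e3) = (b, 0, 0) \<or> (e1, e2, e3) = (0, 3, 0) \<or>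
     (e2 = 0 \<and> e3 = 2 \<and> 3 * e1 + m = 3 * b)"
proof
  assume eq: "e1 * 6 + e2 * (2 * b) + e3 * m = 6 * b"
  have "e3 * m = 2 * (3 * b - 3 * e1 - e2 * b)"
    using eq by (simp add: algebra_simps)
  then have "even e3"
    by (metis dvd_triv_left even_if_even_mult_m)
  moreover have "e3 * m < 3 * m"
    using eq double_b_less_m by linarith
  then have "e3 < 3"
    by simp
  ultimately have "e3 = 0 \<or> e3 = 2"
    by presburger
  then show "(e1, e2, e3) = (b, 0, 0) \<or> (e1, e2, e3) = (0, 3, 0) \<or>
     (e2 = 0 \<and> e3 = 2 \<and> 3 * e1 + m = 3 * b)"
  proof
    assume e3: "e3 = 0"
    then have sum: "3 * e1 + e2 * b = 3 * b"
      using eq by (simp add: algebra_simps)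
    then have "3 dvd e2"
      using three_dvd_mult_b_iff by (metis dvd_add_right_iff dvd_triv_left)
    moreover have "e2 \<le> 3"
      using sum b_pos by (metis le_add2 mult_le_cancel2 order.trans)
    ultimately have "e2 = 0 \<or> e2 = 3"
      by presburger
    then show ?thesis
      using sum e3 by auto
  next
    assume e3: "e3 = 2"
    then have sum: "3 * e1 + e2 * b + m = 3 * b"
      using eq by (simp add: algebra_simps)
    then have "e2 = 0"
      using double_b_less_m by (cases e2) auto
    then show ?thesis
      using sum e3 by simp
  qed
qed auto

lemma factorizations_6b:
  "factorizations 6 (2 * b) m (6 * b) =
     {(b, 0, 0), (0, 3, 0)} \<union>
     (if 3 dvd m \<and> m \<le> 3 * b then {((3 * b - m) div 3, 0, 2)} else {})"
proof (rule set_eqI)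
  fix x :: "nat \<times> nat \<times> nat"
  obtain e1 e2 e3 where x: "x = (e1, e2, e3)"
    by (cases x)
  have "3 dvd (3 * b - m) \<longleftrightarrow> 3 dvd m" if "m \<le> 3 * b"
    using that by presburger
  then show "x \<in> factorizations 6 (2 * b) m (6 * b) \<longleftrightarrow> x \<in> {(b, 0, 0), (0, 3, 0)} \<union>
          (if 3 dvd m \<and> m \<le> 3 * b then {((3 * b - m) div 3, 0, 2)} else {})"
    unfolding x mem_factorizations factorization_eq_6b_iff three_mult_add_eq_iff
    by auto
qed

lemma double_m_mem_gen2: "2 * m \<in> gen2 6 (2 * b)"
proof -
  define r where "r = m mod 3"
  have "r \<le> 2"
    by (simp add: r_def)
  define t where "t = r * b"
  have "t \<le> m"
    using \<open>r \<le> 2\<close> double_b_less_m unfolding t_def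
    by (metis less_imp_le_nat mult_le_mono1 order.trans)
  moreover have "t mod 3 = m mod 3"
    using b_mod_3 unfolding t_def r_def
    by (metis mod_mod_trivial mod_mult_right_eq mult.right_neutral)
  ultimately have "3 dvd m - t"
    by presburger
  then obtain q where "m - t = 3 * q"
    by blast
  then have "2 * m = q * 6 + r * (2 * b)"
    using \<open>t \<le> m\<close> unfolding t_def by linarith
  then show ?thesis
    by (rule mem_gen2I)
qed

lemma least_mult_m_mem_gen2: "(LEAST x. 1 \<le> x \<and> m * x \<in> gen2 6 (2 * b)) = 2"
proof (rule Least_equality)
  show "1 \<le> (2 :: nat) \<and> m * 2 \<in> gen2 6 (2 * b)"
    using double_m_mem_gen2 by (simp add: mult.commute)
next
  fix y
  assume "1 \<le> y \<and> m * y \<in> gen2 6 (2 * b)"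
  then obtain u v where "1 \<le> y" "m * y = u * 6 + v * (2 * b)"
    unfolding gen2_def by blast
  then have "m * y = 2 * (3 * u + v * b)"
    by simp
  then show "2 \<le> y"
    using odd_m \<open>1 \<le> y\<close> by (cases "y = 1") auto
qed

lemma least_mult_double_b_mem_gen2: "(LEAST x. 1 \<le> x \<and> 2 * b * x \<in> gen2 6 m) = 3"
proof (rule Least_equality)
  have "2 * b * 3 \<in> gen2 6 m"
    by (rule mem_gen2I[where u = b and v = 0]) simp
  then show "1 \<le> (3 :: nat) \<and> 2 * b * 3 \<in> gen2 6 m"
    by simp
next
  fix y
  assume "1 \<le> y \<and> 2 * b * y \<in> gen2 6 m"
  then obtain u v where y: "1 \<le> y" and eq: "2 * b * y = u * 6 + v * m"
    unfolding gen2_def by blast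
  have "v * m = 2 * (b * y - 3 * u)"
    using eq by (simp add: algebra_simps)
  then have "even v"
    by (metis dvd_triv_left even_if_even_mult_m)
  then have "v = 0 \<or> 2 \<le> v"
    by presburger
  then consider "v = 0" | "2 \<le> v"
    by blast
  then show "3 \<le> y"
  proof cases
    case 1
    then have "y * b = 3 * u"
      using eq by (simp add: mult.commute)
    then have "3 dvd y"
      using three_dvd_mult_b_iff by (metis dvd_triv_left)
    then show ?thesis
      using y by (simp add: dvd_imp_le)
  next
    case 2
    then have "2 * m \<le> v * m"
      by simp
    then have "2 * b * 2 < 2 * b * y"
      using eq double_b_less_m by linarith
    then show ?thesis
      by simp
  qed
qed

lemma b_le_if_three_mult_eq_mult_b:
  assumes "1 \<le> y" "3 * y = u * b"
  shows "b \<le> y"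
proof -
  have "3 dvd u"
    using assms(2) three_dvd_mult_b_iff by (metis dvd_triv_left)
  moreover have "u \<noteq> 0"
    using assms by (cases "u = 0") auto
  ultimately have "3 * b \<le> u * b"
    by (simp add: dvd_imp_le)
  then show ?thesis
    using assms(2) by linarith
qed

lemma six_mult_mem_gen2_cases:
  assumes "1 \<le> y" "6 * y \<in> gen2 (2 * b) m"
  shows "b \<le> y \<or> 3 * y = m"
proof -
  obtain u v where eq: "6 * y = u * (2 * b) + v * m"
    using assms(2) unfolding gen2_def by blast
  have "v * m = 2 * (3 * y - u * b)"
    using eq by (simp add: algebra_simps)
  then have "even v"
    by (metis dvd_triv_left even_if_even_mult_m)
  then have "v = 0 \<or> (v = 2 \<and> u = 0) \<or> (1 \<le> u \<and> 2 \<le> v) \<or> 4 \<le> v"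
    by presburger
  then consider "v = 0" | "v = 2" "u = 0" | "1 \<le> u" "2 \<le> v" | "4 \<le> v"
    by blast
  then show ?thesis
  proof cases
    case 1
    then have "3 * y = u * b"
      using eq by simp
    then show ?thesis
      using assms(1) b_le_if_three_mult_eq_mult_b by blast
  next
    case 2
    then show ?thesis
      using eq by simp
  next
    case 3
    then have "2 * b \<le> u * (2 * b)" "2 * m \<le> v * m"
      by simp_all
    then show ?thesis
      using eq double_b_less_m by linarith
  next
    case 4
    then have "4 * m \<le> v * m"
      by simp
    then show ?thesis
      using eq double_b_less_m by linarith
  qed
qed

lemma least_six_mult_mem_gen2:
  "(LEAST x. 1 \<le> x \<and> 6 * x \<in> gen2 (2 * b) m) =
     (if 3 dvd m \<and> m \<le> 3 * b then m div 3 else b)"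
proof (rule Least_equality)
  show "1 \<le> (if 3 dvd m \<and> m \<le> 3 * b then m div 3 else b) \<and>
      6 * (if 3 dvd m \<and> m \<le> 3 * b then m div 3 else b) \<in> gen2 (2 * b) m"
  proof (cases "3 dvd m \<and> m \<le> 3 * b")
    case True
    then have "6 * (m div 3) \<in> gen2 (2 * b) m"
      by (intro mem_gen2I[where u = 0 and v = 2]) auto
    moreover have "1 \<le> m div 3"
      using True double_b_less_m b_pos by auto
    ultimately show ?thesis
      unfolding if_P[OF True] by simp
  next
    case False
    have "6 * b \<in> gen2 (2 * b) m"
      by (rule mem_gen2I[where u = 3 and v = 0]) simp
    then show ?thesis
      unfolding if_not_P[OF False] using b_pos by simp
  qed
next
  fix y
  assume "1 \<le> y \<and> 6 * y \<in> gen2 (2 * b) m"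
  then have "b \<le> y \<or> 3 * y = m"
    using six_mult_mem_gen2_cases by blast
  then show "(if 3 dvd m \<and> m \<le> 3 * b then m div 3 else b) \<le> y"
    by auto
qed

end

theorem theorem7:
  fixes \<alpha> m :: nat
  assumes "m > 0" and "odd m" and "m > 6 * \<alpha> + 2"
  defines "x1 \<equiv> (LEAST x::nat. x \<ge> 1 \<and> 6 * x \<in> gen2 (6 * \<alpha> + 2) m)"
      and "x2 \<equiv> (LEAST x::nat. x \<ge> 1 \<and> (6 * \<alpha> + 2) * x \<in> gen2 6 m)"
      and "x3 \<equiv> (LEAST x::nat. x \<ge> 1 \<and> m * x \<in> gen2 6 (6 * \<alpha> + 2))"
  defines "\<beta>1 \<equiv> 6 * x1" and "\<beta>2 \<equiv> (6 * \<alpha> + 2) * x2" and "\<beta>3 \<equiv> m * x3"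
  defines "F \<equiv> factorizations 6 (6 * \<alpha> + 2) m"
  defines "C \<equiv> (6 * \<alpha> + 2 < m \<and> m \<le> 9 * \<alpha> + 3 \<and> 3 dvd m)"
  defines "K \<equiv> {(0::nat, 0::nat, 2::nat)} \<union>
             {((m - k * (3 * \<alpha> + 1)) div 3, k, 0) | k.
                k * (3 * \<alpha> + 1) \<le> m \<and> 3 dvd (m - k * (3 * \<alpha> + 1))}"
  shows "(C \<longrightarrow> \<beta>1 = 2 * m \<and> F \<beta>1 = K) \<and>
         (\<not> C \<longrightarrow> \<beta>1 = 18 * \<alpha> + 6 \<and> F \<beta>1 = {(3 * \<alpha> + 1, 0, 0), (0, 3, 0)})
       \<and> (\<beta>2 = 18 * \<alpha> + 6 \<and>
         (C \<longrightarrow> F \<beta>2 = {((9 * \<alpha> + 3 - m) div 3, 0, 2), (3 * \<alpha> + 1, 0, 0), (0, 3, 0)}) \<and>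
         (\<not> C \<longrightarrow> F \<beta>2 = {(3 * \<alpha> + 1, 0, 0), (0, 3, 0)}))
       \<and> (\<beta>3 = 2 * m \<and> F \<beta>3 = K)"
proof -
  define b where "b = 3 * \<alpha> + 1"
  have gens: "6 * \<alpha> + 2 = 2 * b" "9 * \<alpha> + 3 = 3 * b" "18 * \<alpha> + 6 = 6 * b" "3 * \<alpha> + 1 = b"
    by (simp_all add: b_def)
  interpret generators_6_2b_m b m
    using assms(2,3) by unfold_locales (simp_all add: b_def)
  have C: "C \<longleftrightarrow> 3 dvd m \<and> m \<le> 3 * b"
    using assms(3) unfolding C_def gens by auto
  have \<beta>1: "\<beta>1 = (if C then 2 * m else 6 * b)"
    unfolding \<beta>1_def x1_def gens least_six_mult_mem_gen2 C by auto
  have \<beta>2: "\<beta>2 = 6 * b"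
    unfolding \<beta>2_def x2_def gens least_mult_double_b_mem_gen2 by simp
  have \<beta>3: "\<beta>3 = 2 * m"
    unfolding \<beta>3_def x3_def gens least_mult_m_mem_gen2 by simp
  have F_double_m: "F (2 * m) = K"
    unfolding F_def K_def gens by (rule factorizations_double_m)
  have F_6b: "F (6 * b) = {(b, 0, 0), (0, 3, 0)} \<union> (if C then {((3 * b - m) div 3, 0, 2)} else {})"
    unfolding F_def gens C by (rule factorizations_6b)
  show ?thesis
    unfolding \<beta>1 \<beta>2 \<beta>3 gens by (cases C) (simp_all add: F_double_m F_6b insert_commute)
qed

end
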